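(* For every integer $m\ge1$: \[\sum_{q=1}^{m-1}\frac{\binom{m}{q}\binom{m-1}{q+2}}{\binom{2m}{2q}} = \frac{1}{6}m^2 -\frac{13}{6}m -3 +\frac{5}{2}\,4^m\frac{(m!)^2}{(2m)!},\] \[\sum_{q=1}^{m-1}\frac{\binom{m}{q}\binom{m-1}{q+1}}{\binom{2m}{2q}} = m +2 -\frac{3}{2}\,4^m\frac{(m!)^2}{(2m)!},\] \[\sum_{q=1}^{m-1}\frac{\binom{m}{q}\binom{m-1}{q}}{\binom{2m}{2q}} = -1 +\frac{1}{2}\,4^m\frac{(m!)^2}{(2m)!}.\]
   Context: Binomial coefficients $\binom{n}{k}$ are zero when $k>n$ or $k<0$. *)

theory Defs
  imports Complex_Main
begin

end

theory Submission
  imports Defs "HOL-Computational_Algebra.Formal_Power_Series"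
begin

(*
  Write c k = (2k choose k) / 4^k.  Then (m choose q)^2 c m = (2m choose 2q) c q c (m - q), and
  (m - 1 choose q + j) is (m choose q) times a rational function r_j(q), so each sum equals
  (\<Sum>q. c q c (m - q) r_j(q)) / (m c m).  The weights c q c (m - q) sum to 1 over 0..m
  (Vandermonde's identity for the exponent -1/2), and by the symmetry q \<leftrightarrow> m - q their first
  moment is m/2; this settles j = 0.  For j = 1, 2, Gosper's algorithm yields rational
  antidifferences showing that r_1 + 3 r_0 and r_2 - 5 r_0 sum to closed forms, since
  (q + 1)(2(m - q) - 1) w(q + 1) = (2q + 1)(m - q) w(q) for w(q) = c q c (m - q).
*)

definition central_ratio :: "nat \<Rightarrow> real" where
  "central_ratio k = fact (2*k) / (fact k ^ 2 * 4 ^ k)"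

definition central_weight :: "nat \<Rightarrow> nat \<Rightarrow> real" where
  "central_weight m q = central_ratio q * central_ratio (m - q)"

lemma central_ratio_pos: "central_ratio k > 0"
  by (simp add: central_ratio_def)

lemma central_ratio_0 [simp]: "central_ratio 0 = 1"
  by (simp add: central_ratio_def)

lemma central_ratio_Suc:
  "(2 * real k + 2) * central_ratio (Suc k) = (2 * real k + 1) * central_ratio k"
proof -
  have "fact (2 * Suc k) = (2 * real k + 2) * (2 * real k + 1) * fact (2 * k)"
    by (simp add: algebra_simps)
  then show ?thesis
    unfolding central_ratio_def by (simp add: divide_simps) (simp add: algebra_simps power2_eq_square)
qed

lemma central_ratio_Suc_0 [simp]: "central_ratio (Suc 0) = 1/2"
  using central_ratio_Suc[of 0] by simp

lemma central_ratio_pred: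
  "0 < m \<Longrightarrow> (2 * real m - 1) * central_ratio (m - 1) = 2 * real m * central_ratio m"
  using central_ratio_Suc[of "m - 1"] by (simp add: of_nat_diff algebra_simps)

lemma central_ratio_eq_gbinomial: "central_ratio k = (-1) ^ k * ((-1/2) gchoose k)"
proof (induction k)
  case (Suc k)
  have ratio: "central_ratio (Suc k) = (2 * real k + 1) / (2 * real k + 2) * central_ratio k"
    using central_ratio_Suc[of k] by (simp add: divide_simps mult.commute)
  have gchoose:
    "(-1/2 :: real) gchoose Suc k = - (2 * real k + 1) / (2 * real k + 2) * ((-1/2) gchoose k)"
    using gbinomial_mult_1[of "-1/2 :: real" k] by (simp add: divide_simps) (simp add: algebra_simps)
  show ?case
    unfolding ratio gchoose Suc.IH by (simp add: field_simps)
qed simp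

(* The generating function of central_ratio is (1 - x) powr (-1/2); its square is 1 / (1 - x). *)
lemma sum_central_weight: "(\<Sum>q=0..m. central_weight m q) = 1"
proof -
  have "(\<Sum>q=0..m. central_weight m q)
      = (-1) ^ m * (\<Sum>q=0..m. ((-1/2 :: real) gchoose q) * ((-1/2) gchoose (m - q)))"
    unfolding sum_distrib_left
  proof (rule sum.cong)
    fix q assume "q \<in> {0..m}"
    then have "(-1 :: real) ^ q * (-1) ^ (m - q) = (-1) ^ m"
      by (simp flip: power_add)
    then show "central_weight m q = (-1) ^ m * (((-1/2) gchoose q) * ((-1/2) gchoose (m - q)))"
      unfolding central_weight_def central_ratio_eq_gbinomial by (metis mult.assoc mult.left_commute)
  qed simp
  also have "\<dots> = (-1) ^ m * ((-1 :: real) gchoose m)"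
    using gbinomial_Vandermonde[of "-1/2 :: real" "-1/2" m] by simp
  also have "\<dots> = 1"
    using gbinomial_minus[of "1 :: real" m] binomial_gbinomial[of m m, where 'a = real]
    by (simp flip: power_mult_distrib)
  finally show ?thesis .
qed

lemma sum_central_weight_mult_diff:
  "(\<Sum>q=0..m. central_weight m q * (real m - real q)) = real m / 2"
proof -
  have symm: "(\<Sum>q=0..m. central_weight m q * (real m - real q))
      = (\<Sum>q=0..m. central_weight m q * real q)"
    by (subst sum.atLeastAtMost_rev) (auto intro!: sum.cong simp: central_weight_def of_nat_diff)
  have "(\<Sum>q=0..m. central_weight m q * (real m - real q)) + (\<Sum>q=0..m. central_weight m q * real q)
      = real m"
    by (simp add: algebra_simps flip: sum.distrib sum_distrib_left add: sum_central_weight)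
  with symm show ?thesis by simp
qed

lemma choose_square_mult_central_ratio:
  assumes "q \<le> m"
  shows "real (m choose q) ^ 2 * central_ratio m = real ((2*m) choose (2*q)) * central_weight m q"
proof -
  obtain d where d: "m = q + d" using assms le_Suc_ex by blast
  then have diff: "m - q = d" "2*m - 2*q = 2*d" "(4::real) ^ m = 4 ^ q * 4 ^ d"
    by (simp_all add: power_add)
  have choose: "real (m choose q) = fact m / (fact q * fact d)"
    using binomial_fact[OF assms] diff by simp
  have double_choose: "real ((2*m) choose (2*q)) = fact (2*m) / (fact (2*q) * fact (2*d))"
    using binomial_fact[of "2*q" "2*m"] assms diff by simp
  show ?thesis
    unfolding choose double_choose central_weight_def central_ratio_def diff
    by (simp add: field_simps power2_eq_square)
qed

lemma Suc_times_binomial_Suc_eq: "Suc k * (n choose Suc k) = (n - k) * (n choose k)"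
  by (simp only: binomial_absorption binomial_absorb_comp)

lemma of_nat_choose_Suc:
  "real (n choose Suc k) = real (n choose k) * (real n - real k) / (real k + 1)"
proof (cases "k \<le> n")
  case True
  then have "(real k + 1) * real (n choose Suc k) = real (n choose k) * (real n - real k)"
    using Suc_times_binomial_Suc_eq[of k n, THEN arg_cong[where f = real]]
    by (simp add: of_nat_diff algebra_simps)
  then show ?thesis by (simp add: field_simps)
qed (simp add: binomial_eq_0)

lemma of_nat_choose_pred:
  assumes "0 < m" and "q \<le> m"
  shows "real ((m - 1) choose q) = real (m choose q) * (real m - real q) / real m"
proof -
  have "real ((m - q) * (m choose q)) = real (m * ((m - 1) choose q))"
    by (simp only: binomial_absorb_comp)
  with assms show ?thesis by (simp add: field_simps of_nat_diff)
qed

lemma of_nat_choose_pred_add_1: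
  assumes "0 < m" and "q \<le> m"
  shows "real ((m - 1) choose (q + 1)) = real (m choose q)
    * ((real m - real q) * (real m - real q - 1) / (real q + 1)) / real m"
proof -
  have "real ((m - 1) choose (q + 1)) = real ((m - 1) choose q) * (real m - real q - 1) / (real q + 1)"
    using of_nat_choose_Suc[of "m - 1" q] assms(1) by (simp add: of_nat_diff)
  also have "\<dots> = real (m choose q) * (real m - real q) / real m * (real m - real q - 1) / (real q + 1)"
    by (simp only: of_nat_choose_pred[OF assms])
  finally show ?thesis by (simp add: mult_ac)
qed

lemma of_nat_choose_pred_add_2:
  assumes "0 < m" and "q \<le> m"
  shows "real ((m - 1) choose (q + 2)) = real (m choose q)
    * ((real m - real q) * (real m - real q - 1) * (real m - real q - 2) / ((real q + 1) * (real q + 2)))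
    / real m"
proof -
  have "real ((m - 1) choose (q + 2))
      = real ((m - 1) choose (q + 1)) * (real m - real q - 2) / (real q + 2)"
    using of_nat_choose_Suc[of "m - 1" "q + 1"] assms(1) by (simp add: of_nat_diff add_ac)
  also have "\<dots> = real (m choose q) * ((real m - real q) * (real m - real q - 1) / (real q + 1)) / real m
      * (real m - real q - 2) / (real q + 2)"
    by (simp only: of_nat_choose_pred_add_1[OF assms])
  finally show ?thesis by (simp add: mult_ac)
qed

lemma sum_choose_ratio_eq:
  assumes "0 < m"
    and ratio: "\<And>q. q \<le> m \<Longrightarrow> real ((m - 1) choose (q + j)) = real (m choose q) * r q / real m"
  shows "(\<Sum>q=1..m-1. real (m choose q) * real ((m - 1) choose (q + j)) / real ((2*m) choose (2*q)))
    = (\<Sum>q=1..m-1. central_weight m q * r q) / (real m * central_ratio m)"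
  unfolding sum_divide_distrib
proof (rule sum.cong)
  fix q assume "q \<in> {1..m-1}"
  then have q: "q \<le> m" by auto
  have "real ((2*m) choose (2*q)) > 0" using q by simp
  with assms(1) central_ratio_pos[of m] choose_square_mult_central_ratio[OF q] show
    "real (m choose q) * real ((m - 1) choose (q + j)) / real ((2*m) choose (2*q))
      = central_weight m q * r q / (real m * central_ratio m)"
    unfolding ratio[OF q] by (simp add: field_simps power2_eq_square)
qed simp

lemma central_weight_Suc:
  assumes "q < m"
  shows "(real q + 1) * (2 * (real m - real q) - 1) * central_weight m (Suc q)
    = (2 * real q + 1) * (real m - real q) * central_weight m q"
proof -
  obtain k where k: "m - q = Suc k" using assms by (metis Suc_diff_Suc)
  then have diff: "m - Suc q = k" "real m - real q = real k + 1" using assms by auto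
  have "2 * ((real q + 1) * (2 * real k + 1) * (central_ratio (Suc q) * central_ratio k))
      = ((2 * real q + 2) * central_ratio (Suc q)) * ((2 * real k + 1) * central_ratio k)"
    by (simp add: algebra_simps)
  also have "\<dots> = ((2 * real q + 1) * central_ratio q) * ((2 * real k + 2) * central_ratio (Suc k))"
    by (simp only: central_ratio_Suc)
  also have "\<dots> = 2 * ((2 * real q + 1) * (real k + 1) * (central_ratio q * central_ratio (Suc k)))"
    by (simp add: algebra_simps)
  finally show ?thesis
    unfolding central_weight_def k diff by (simp add: algebra_simps)
qed

lemma gosper_quadratic_step:
  fixes x s v v' :: real
  assumes "x \<ge> 0" and "s \<ge> 1" and step: "(x + 1) * (2*s - 1) * v' = (2*x + 1) * s * v"
  shows "v * (s * (s - 1) / (x + 1) + 3 * s) = (2*s + 1) * s * v - (2*s - 1) * (s - 1) * v'"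
proof -
  have nz: "x + 1 \<noteq> 0" "2*s - 1 \<noteq> 0" using assms(1,2) by auto
  have v': "v' = (2*x + 1) * s * v / ((x + 1) * (2*s - 1))"
    using nz step by (simp add: divide_simps) (simp add: algebra_simps)
  show ?thesis using nz unfolding v' by (simp add: divide_simps) (simp add: algebra_simps)
qed

definition gosper_cubic :: "real \<Rightarrow> real \<Rightarrow> real" where
  "gosper_cubic x s = s * (10*x*s - 2*s^2 + 11*s + 5*x + 6) / (3*(x + 1))"

lemma gosper_cubic_step:
  fixes x s v v' :: real
  assumes "x \<ge> 0" and "s \<ge> 1" and step: "(x + 1) * (2*s - 1) * v' = (2*x + 1) * s * v"
  shows "v * (s * (s - 1) * (s - 2) / ((x + 1) * (x + 2)) - 5 * s)
    = gosper_cubic (x + 1) (s - 1) * v' - gosper_cubic x s * v"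
proof -
  have nz: "x + 1 \<noteq> 0" "x + 2 \<noteq> 0" "2*s - 1 \<noteq> 0" using assms(1,2) by auto
  have v': "v' = (2*x + 1) * s * v / ((x + 1) * (2*s - 1))"
    using nz step by (simp add: divide_simps) (simp add: algebra_simps)
  show ?thesis
    using nz unfolding v' gosper_cubic_def
    by (simp add: divide_simps) (simp add: algebra_simps power2_eq_square)
qed

lemma sum_central_weight_linear:
  assumes "0 < m"
  shows "(\<Sum>q=1..m-1. central_weight m q * (real m - real q))
    = real m / 2 - real m * central_ratio m"
proof -
  obtain n where m: "m = Suc n" using assms gr0_implies_Suc by blast
  define f where "f q = central_weight m q * (real m - real q)" for q
  have "real m / 2 = (\<Sum>q=0..Suc n. f q)"
    using sum_central_weight_mult_diff[of m] by (simp add: f_def m)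
  also have "\<dots> = f 0 + (\<Sum>q=1..n. f q) + f (Suc n)"
    by (simp add: sum.atLeast_Suc_atMost)
  finally have "real m / 2 = f 0 + (\<Sum>q=1..n. f q) + f (Suc n)" .
  moreover have "f 0 = real m * central_ratio m" "f (Suc n) = 0"
    by (simp_all add: f_def m central_weight_def)
  moreover have "(\<Sum>q=1..m-1. central_weight m q * (real m - real q)) = (\<Sum>q=1..n. f q)"
    by (simp add: f_def m)
  ultimately show ?thesis by linarith
qed

lemma sum_central_weight_quadratic:
  assumes "0 < m"
  shows "(\<Sum>q=1..m-1. central_weight m q
      * ((real m - real q) * (real m - real q - 1) / (real q + 1) + 3 * (real m - real q)))
    = real m * (real m - 1) * central_ratio m"
    (is "sum ?f _ = _")
proof -
  define F where "F q = - (2 * (real m - real q) + 1) * (real m - real q) * central_weight m q" for q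
  have "?f q = F (Suc q) - F q" if "q < m" for q
  proof -
    have "?f q = (2 * (real m - real q) + 1) * (real m - real q) * central_weight m q
        - (2 * (real m - real q) - 1) * (real m - real q - 1) * central_weight m (Suc q)"
      using that by (intro gosper_quadratic_step central_weight_Suc) auto
    also have "\<dots> = F (Suc q) - F q"
      unfolding F_def by (simp add: algebra_simps)
    finally show ?thesis .
  qed
  then have "sum ?f {1..m-1} = (\<Sum>q=1..m-1. F (Suc q) - F q)"
    by (intro sum.cong) auto
  also have "\<dots> = F m - F 1"
    using sum_Suc_diff[of 1 "m - 1" F] assms by simp
  also have "\<dots> = real m * (real m - 1) * central_ratio m"
    using central_ratio_pred[OF assms]
    by (simp add: F_def central_weight_def of_nat_diff algebra_simps) algebra
  finally show ?thesis .
qed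

lemma sum_central_weight_cubic:
  assumes "0 < m"
  shows "(\<Sum>q=1..m-1. central_weight m q
      * ((real m - real q) * (real m - real q - 1) * (real m - real q - 2) / ((real q + 1) * (real q + 2))
         - 5 * (real m - real q)))
    = real m * (real m - 1) * (real m - 12) / 6 * central_ratio m"
    (is "sum ?f _ = _")
proof -
  define F where "F q = gosper_cubic (real q) (real m - real q) * central_weight m q" for q
  have "?f q = F (Suc q) - F q" if "q < m" for q
  proof -
    have "?f q = gosper_cubic (real q + 1) (real m - real q - 1) * central_weight m (Suc q)
        - gosper_cubic (real q) (real m - real q) * central_weight m q"
      using that by (intro gosper_cubic_step central_weight_Suc) auto
    also have "\<dots> = F (Suc q) - F q"
      unfolding F_def by (simp add: algebra_simps)
    finally show ?thesis .
  qed
  then have "sum ?f {1..m-1} = (\<Sum>q=1..m-1. F (Suc q) - F q)"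
    by (intro sum.cong) auto
  also have "\<dots> = F m - F 1"
    using sum_Suc_diff[of 1 "m - 1" F] assms by simp
  also have "\<dots> = real m * (real m - 1) * (real m - 12) / 6 * central_ratio m"
    using central_ratio_pred[OF assms]
    by (simp add: F_def gosper_cubic_def central_weight_def of_nat_diff algebra_simps power2_eq_square)
      algebra
  finally show ?thesis .
qed

lemma sum_choose_mult_choose_pred_div:
  assumes "0 < m"
  shows "(\<Sum>q=1..m-1. real (m choose q) * real ((m - 1) choose q) / real ((2*m) choose (2*q)))
    = -1 + 1/2 / central_ratio m"
proof -
  have "(\<Sum>q=1..m-1. real (m choose q) * real ((m - 1) choose q) / real ((2*m) choose (2*q)))
      = (\<Sum>q=1..m-1. central_weight m q * (real m - real q)) / (real m * central_ratio m)"
    using sum_choose_ratio_eq[of m 0 "\<lambda>q. real m - real q"] of_nat_choose_pred assms by simp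
  also have "\<dots> = (real m / 2 - real m * central_ratio m) / (real m * central_ratio m)"
    by (simp only: sum_central_weight_linear[OF assms])
  also have "\<dots> = -1 + 1/2 / central_ratio m"
    using assms central_ratio_pos[of m] by (simp add: field_simps)
  finally show ?thesis .
qed

lemma sum_choose_mult_choose_pred_add_1_div:
  assumes "0 < m"
  shows "(\<Sum>q=1..m-1. real (m choose q) * real ((m - 1) choose (q + 1)) / real ((2*m) choose (2*q)))
    = real m + 2 - 3/2 / central_ratio m"
proof -
  let ?r = "\<lambda>q. (real m - real q) * (real m - real q - 1) / (real q + 1)"
  have "(\<Sum>q=1..m-1. real (m choose q) * real ((m - 1) choose (q + 1)) / real ((2*m) choose (2*q)))
      = (\<Sum>q=1..m-1. central_weight m q * ?r q) / (real m * central_ratio m)"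
    using sum_choose_ratio_eq[of m 1 ?r] of_nat_choose_pred_add_1 assms by simp
  also have "(\<Sum>q=1..m-1. central_weight m q * ?r q)
      = (\<Sum>q=1..m-1. central_weight m q * (?r q + 3 * (real m - real q)))
        - 3 * (\<Sum>q=1..m-1. central_weight m q * (real m - real q))"
    by (simp add: ring_distribs sum.distrib sum_distrib_left mult.left_commute)
  also have "\<dots> = real m * (real m - 1) * central_ratio m - 3 * (real m / 2 - real m * central_ratio m)"
    using assms by (simp only: sum_central_weight_quadratic sum_central_weight_linear)
  also have "\<dots> / (real m * central_ratio m) = real m + 2 - 3/2 / central_ratio m"
    using assms central_ratio_pos[of m] by (simp add: field_simps)
  finally show ?thesis .
qed

lemma sum_choose_mult_choose_pred_add_2_div:
  assumes "0 < m"
  shows "(\<Sum>q=1..m-1. real (m choose q) * real ((m - 1) choose (q + 2)) / real ((2*m) choose (2*q)))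
    = 1/6 * (real m)^2 - 13/6 * real m - 3 + 5/2 / central_ratio m"
proof -
  let ?r = "\<lambda>q. (real m - real q) * (real m - real q - 1) * (real m - real q - 2)
    / ((real q + 1) * (real q + 2))"
  have "(\<Sum>q=1..m-1. real (m choose q) * real ((m - 1) choose (q + 2)) / real ((2*m) choose (2*q)))
      = (\<Sum>q=1..m-1. central_weight m q * ?r q) / (real m * central_ratio m)"
    using sum_choose_ratio_eq[of m 2 ?r] of_nat_choose_pred_add_2 assms by simp
  also have "(\<Sum>q=1..m-1. central_weight m q * ?r q)
      = (\<Sum>q=1..m-1. central_weight m q * (?r q - 5 * (real m - real q)))
        + 5 * (\<Sum>q=1..m-1. central_weight m q * (real m - real q))"
    by (simp add: algebra_simps sum.distrib sum_distrib_left sum_subtractf)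
  also have "\<dots> = real m * (real m - 1) * (real m - 12) / 6 * central_ratio m
      + 5 * (real m / 2 - real m * central_ratio m)"
    using assms by (simp only: sum_central_weight_cubic sum_central_weight_linear)
  also have "\<dots> / (real m * central_ratio m)
      = 1/6 * (real m)^2 - 13/6 * real m - 3 + 5/2 / central_ratio m"
    using assms central_ratio_pos[of m] by (simp add: field_simps power2_eq_square)
  finally show ?thesis .
qed

theorem propositionA1:
  fixes m :: nat
  assumes "m \<ge> 1"
  shows "((\<Sum>q=1..m-1. real (m choose q) * real ((m - 1) choose (q + 2)) / real ((2*m) choose (2*q)))
           = 1/6 * (real m)^2 - 13/6 * real m - 3 + 5/2 * 4^m * (fact m)^2 / fact (2*m))
    \<and> ((\<Sum>q=1..m-1. real (m choose q) * real ((m - 1) choose (q + 1)) / real ((2*m) choose (2*q)))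
           = real m + 2 - 3/2 * 4^m * (fact m)^2 / fact (2*m))
    \<and> ((\<Sum>q=1..m-1. real (m choose q) * real ((m - 1) choose q) / real ((2*m) choose (2*q)))
           = -1 + 1/2 * 4^m * (fact m)^2 / fact (2*m))"
proof -
  have m: "0 < m" using assms by simp
  have scaled: "c * 4 ^ m * (fact m)^2 / fact (2*m) = c / central_ratio m" for c :: real
    by (simp add: central_ratio_def)
  show ?thesis
    unfolding scaled
    using sum_choose_mult_choose_pred_add_2_div[OF m] sum_choose_mult_choose_pred_add_1_div[OF m]
      sum_choose_mult_choose_pred_div[OF m]
    by blast
qed

end
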